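(* In the homogeneous case $\rho(du|s)=\rho(du)$ with $\Lambda_0(t)=t$, suppose that given $(\mathbf m,\mathbf p)$ the ordered distinct times $T_{(1:n)}>\dots>T_{(n(\mathbf p):n)}$ have joint density (with respect to Lebesgue measure on $\{t_1>\dots>t_{n(\mathbf p)}>0\}$) $$\Big[\prod_{j=1}^{n(\mathbf p)}\phi(r_j)\Big]\prod_{j=1}^{n(\mathbf p)}e^{-\psi_{m_j,r_{j-1}}t_j}.$$ Then, conditionally on $T_{(j+1:n)},\dots,T_{(n(\mathbf p):n)}$, the distribution of $T_{(j:n)}$ depends only on $T_{(j+1:n)}=t_{j+1}$ and is the truncated exponential distribution $$\mathbb P(T_{(j:n)}\in dt_j\mid T_{(j+1:n)}=t_{j+1})=\phi(r_j)e^{-\phi(r_j)(t_j-t_{j+1})}dt_j,\qquad t_j>t_{j+1}.$$ In particular the smallest value $T_{(n(\mathbf p):n)}$ has density $\phi(n)e^{-\phi(n)y}$, $y>0$.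
   Context: $\rho(du)$ is a Lévy measure on $[0,1]$ with $\int_0^1u\rho(du)=1$. $\mathbf p$ is a partition of $\{1,\dots,n\}$ into $n(\mathbf p)$ blocks, $\mathbf m=(E_{(1)},\dots,E_{(n(\mathbf p))})$ an ordering of its blocks, $m_j=|E_{(j)}|$, $r_0=0$, $r_j=\sum_{l\le j}m_l$ (so $r_{n(\mathbf p)}=n$). $\phi(\omega)=\int_0^1(1-(1-u)^\omega)\rho(du)$ and $\psi_{i,k}=\int_0^1(1-(1-u)^i)(1-u)^k\rho(du)$. (This density is the homogeneous conditional law of the ordered distinct death times given $(\mathbf m,\mathbf p)$ for a sample from a spatial NTR process with hazard $\Lambda_0(t)=t$.) *)

theory Defs
  imports "HOL-Probability.Probability"
begin

definition levy_measure_01 :: "real measure \<Rightarrow> bool" where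
  "levy_measure_01 \<rho> \<longleftrightarrow> sets \<rho> = sets borel \<and> emeasure \<rho> (- {0<..1}) = 0
     \<and> (\<integral>\<^sup>+ u. ennreal u \<partial>\<rho>) < \<infinity>"

definition phi :: "real measure \<Rightarrow> nat \<Rightarrow> real" where
  "phi \<rho> \<omega> = (\<integral> u. (1 - (1 - u) ^ \<omega>) \<partial>\<rho>)"

definition psi :: "real measure \<Rightarrow> nat \<Rightarrow> nat \<Rightarrow> real" where
  "psi \<rho> i k = (\<integral> u. (1 - (1 - u) ^ i) * (1 - u) ^ k \<partial>\<rho>)"

definition ordered_partition :: "nat \<Rightarrow> nat set list \<Rightarrow> bool" where
  "ordered_partition n Es \<longleftrightarrow> (\<forall>E\<in>set Es. E \<noteq> {})
     \<and> (\<forall>i<length Es. \<forall>j<length Es. i \<noteq> j \<longrightarrow> Es ! i \<inter> Es ! j = {})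
     \<and> \<Union> (set Es) = {1..n}"

text \<open>Block sizes m_j (1-based) and partial sums r_j, with r_0 = 0.\<close>
definition blk :: "nat set list \<Rightarrow> nat \<Rightarrow> nat" where
  "blk Es j = card (Es ! (j - 1))"

definition rsum :: "nat set list \<Rightarrow> nat \<Rightarrow> nat" where
  "rsum Es j = (\<Sum>l\<in>{1..j}. blk Es l)"

definition ntr_density :: "real measure \<Rightarrow> nat set list \<Rightarrow> (nat \<Rightarrow> real) \<Rightarrow> ennreal" where
  "ntr_density \<rho> Es t =
     indicator {t. (\<forall>j\<in>{1..<length Es}. t j > t (Suc j)) \<and> t (length Es) > 0} t *
     ennreal ((\<Prod>j\<in>{1..length Es}. phi \<rho> (rsum Es j)) *
              (\<Prod>j\<in>{1..length Es}. exp (- psi \<rho> (blk Es j) (rsum Es (j - 1)) * t j)))"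

end

theory Submission
  imports Defs
begin

text \<open>Write N = n(p). Because psi(m, k) = phi(k + m) - phi(k), summation by parts rewrites the
  exponent of the joint density as the sum over j of phi(r_j) (t_j - t_(j+1)), where t_(N+1) = 0.
  The density is thus a product of exponential densities, the j-th one with rate phi(r_j) > 0 and
  shifted to start at t_(j+1). Integrating out t_1, t_2, ... in turn, each factor integrates to 1,
  so (T_j, ..., T_N) has the product of the factors of index at least j as its density.\<close>

lemma levy_measure_01_AE:
  assumes "levy_measure_01 \<rho>" shows "AE u in \<rho>. 0 < u \<and> u \<le> 1"
proof (rule AE_I[of _ _ "- {0<..1}"])
  show "emeasure \<rho> (- {0<..1}) = 0" "- {0<..1} \<in> sets \<rho>"
    using assms by (simp_all add: levy_measure_01_def)
qed auto

lemma integrable_phi_integrand: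
  assumes levy: "levy_measure_01 \<rho>" shows "integrable \<rho> (\<lambda>u. 1 - (1 - u) ^ w)"
proof (rule Bochner_Integration.integrable_bound)
  have sets: "sets \<rho> = sets borel" using levy by (simp add: levy_measure_01_def)
  have "integrable \<rho> (\<lambda>u. u)"
  proof (rule integrableI_nonneg)
    show "(\<integral>\<^sup>+ u. ennreal u \<partial>\<rho>) < \<infinity>" using levy by (simp add: levy_measure_01_def)
  qed (use levy_measure_01_AE[OF levy] sets in \<open>auto simp: measurable_cong_sets[OF sets refl]\<close>)
  then show "integrable \<rho> (\<lambda>u. real w * u)" by simp
  show "(\<lambda>u. 1 - (1 - u) ^ w) \<in> borel_measurable \<rho>"
    by (subst measurable_cong_sets[OF sets refl]) simp
  show "AE u in \<rho>. norm (1 - (1 - u) ^ w) \<le> norm (real w * u)"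
    using levy_measure_01_AE[OF levy]
  proof eventually_elim
    case (elim u)
    have "1 + real w * (- u) \<le> (1 + - u) ^ w"
      using elim by (intro Bernoulli_inequality) auto
    moreover have "(1 - u) ^ w \<le> 1" using elim by (intro power_le_one) auto
    ultimately show ?case using elim by auto
  qed
qed

lemma phi_0 [simp]: "phi \<rho> 0 = 0"
  by (simp add: phi_def)

lemma phi_nonneg:
  assumes levy: "levy_measure_01 \<rho>" shows "0 \<le> phi \<rho> w"
  unfolding phi_def
proof (intro integral_nonneg_AE)
  show "AE u in \<rho>. 0 \<le> 1 - (1 - u) ^ w"
    using levy_measure_01_AE[OF levy] by eventually_elim (simp add: power_le_one)
qed

lemma phi_pos:
  assumes levy: "levy_measure_01 \<rho>" and nontrivial: "(\<integral>\<^sup>+ u. ennreal u \<partial>\<rho>) \<noteq> 0"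
    and w: "w \<ge> 1"
  shows "0 < phi \<rho> w"
proof -
  have pos: "AE u in \<rho>. 0 < 1 - (1 - u) ^ w"
    using levy_measure_01_AE[OF levy]
  proof eventually_elim
    case (elim u)
    then have "(1 - u) ^ w < 1" using w by (intro power_less_one_iff[THEN iffD2]) auto
    then show ?case by simp
  qed
  have "\<not> (AE u in \<rho>. 1 - (1 - u) ^ w = 0)"
  proof
    assume "AE u in \<rho>. 1 - (1 - u) ^ w = 0"
    with pos have "AE u in \<rho>. False" by eventually_elim simp
    then have "(\<integral>\<^sup>+ u. ennreal u \<partial>\<rho>) = 0"
      by (simp add: nn_integral_cong_AE[where v="\<lambda>_. 0"] eventually_mono)
    with nontrivial show False by simp
  qed
  moreover have "AE u in \<rho>. 0 \<le> 1 - (1 - u) ^ w"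
    using pos by eventually_elim simp
  ultimately have "phi \<rho> w \<noteq> 0"
    unfolding phi_def using integral_nonneg_eq_0_iff_AE[OF integrable_phi_integrand[OF levy]] by simp
  with phi_nonneg[OF levy, of w] show ?thesis by simp
qed

lemma psi_eq_phi_diff:
  assumes levy: "levy_measure_01 \<rho>" shows "psi \<rho> m k = phi \<rho> (k + m) - phi \<rho> k"
proof -
  have "phi \<rho> (k + m) - phi \<rho> k = (\<integral>u. (1 - (1 - u) ^ (k + m)) - (1 - (1 - u) ^ k) \<partial>\<rho>)"
    unfolding phi_def by (rule Bochner_Integration.integral_diff[symmetric])
      (rule integrable_phi_integrand[OF levy])+
  also have "\<dots> = psi \<rho> m k"
    unfolding psi_def by (rule Bochner_Integration.integral_cong) (auto simp: algebra_simps power_add)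
  finally show ?thesis by simp
qed

lemma rsum_Suc: "rsum Es (Suc l) = rsum Es l + blk Es (Suc l)"
  by (simp add: rsum_def)

lemma rsum_0 [simp]: "rsum Es 0 = 0"
  by (simp add: rsum_def)

lemma ordered_partition_finite_blocks:
  assumes "ordered_partition n Es" "E \<in> set Es" shows "finite E"
  using assms unfolding ordered_partition_def by (metis Sup_upper finite_atLeastAtMost finite_subset)

lemma ordered_partition_nonempty:
  assumes "ordered_partition n Es" "n \<ge> 1" shows "Es \<noteq> []"
  using assms by (auto simp: ordered_partition_def)

lemma rsum_pos:
  assumes part: "ordered_partition n Es" and l: "1 \<le> l" "l \<le> length Es"
  shows "rsum Es l \<ge> 1"
proof -
  have "Es ! (l - 1) \<in> set Es" using l by auto
  then have "blk Es l \<ge> 1"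
    using part ordered_partition_finite_blocks[OF part]
    by (auto simp: blk_def ordered_partition_def Suc_le_eq card_gt_0_iff)
  moreover have "blk Es l \<le> rsum Es l"
    unfolding rsum_def by (rule member_le_sum) (use l in auto)
  ultimately show ?thesis by simp
qed

lemma rsum_length:
  assumes part: "ordered_partition n Es" shows "rsum Es (length Es) = n"
proof -
  have "rsum Es (length Es) = (\<Sum>i<length Es. card (Es ! i))"
    unfolding rsum_def blk_def
    by (rule sum.reindex_bij_witness[where i=Suc and j="\<lambda>l. l - 1"]) auto
  also have "\<dots> = card (\<Union>i<length Es. Es ! i)"
    using part ordered_partition_finite_blocks[OF part]
    by (intro card_UN_disjoint[symmetric]) (auto simp: ordered_partition_def)
  also have "(\<Union>i<length Es. Es ! i) = \<Union> (set Es)"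
    using nth_mem by (fastforce simp: in_set_conv_nth)
  finally show ?thesis using part by (simp add: ordered_partition_def)
qed

lemma sum_psi_rsum_telescope:
  assumes levy: "levy_measure_01 \<rho>"
  shows "(\<Sum>l=1..N. psi \<rho> (blk Es l) (rsum Es (l - 1)) * t l)
       = (\<Sum>l=1..N. phi \<rho> (rsum Es l) * (t l - t (Suc l))) + phi \<rho> (rsum Es N) * t (Suc N)"
  by (induction N) (auto simp: psi_eq_phi_diff[OF levy] rsum_Suc algebra_simps)

definition shifted_exp_density :: "real \<Rightarrow> real \<Rightarrow> real \<Rightarrow> ennreal" where
  "shifted_exp_density c a y = ennreal (c * exp (- c * (y - a))) * indicator {a<..} y"

lemma borel_measurable_shifted_exp_density [measurable]:
  assumes [measurable]: "f \<in> borel_measurable M" "g \<in> borel_measurable M"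
  shows "(\<lambda>x. shifted_exp_density c (f x) (g x)) \<in> borel_measurable M"
  unfolding shifted_exp_density_def indicator_def greaterThan_iff by measurable

lemma nn_integral_shifted_exp_density:
  assumes c: "c > 0" shows "(\<integral>\<^sup>+ y. shifted_exp_density c a y \<partial>lborel) = 1"
proof -
  have "(\<integral>\<^sup>+ y. shifted_exp_density c a y \<partial>lborel)
      = (\<integral>\<^sup>+ y. ennreal (c * exp (- c * (y - a))) * indicator {a..} y \<partial>lborel)"
    unfolding shifted_exp_density_def
    by (rule nn_integral_cong_AE)
       (use AE_lborel_singleton[of a] in \<open>auto elim!: eventually_mono split: split_indicator\<close>)
  also have "\<dots> = ennreal (0 - (- exp (- c * (a - a))))"
  proof (rule nn_integral_FTC_atLeast[where F="\<lambda>y. - exp (- c * (y - a))"])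
    show "((\<lambda>y. - exp (- c * (y - a))) has_real_derivative c * exp (- c * (x - a))) (at x)" for x
      by (auto intro!: derivative_eq_intros)
    have "filterlim (\<lambda>y. y - a) at_top at_top"
      using filterlim_tendsto_add_at_top[OF tendsto_const filterlim_ident, of "- a"] by simp
    then have "filterlim (\<lambda>y. - c * (y - a)) at_bot at_top"
      using c by (intro filterlim_cmult_at_bot_at_top) auto
    from filterlim_compose[OF exp_at_bot this]
    show "((\<lambda>y. - exp (- c * (y - a))) \<longlongrightarrow> 0) at_top"
      using tendsto_minus by fastforce
  qed (use c in simp_all)
  finally show ?thesis by simp
qed

lemma nn_integral_PiM_insert_kernel:
  fixes F :: "('i \<Rightarrow> real) \<Rightarrow> ennreal" and h :: "real \<Rightarrow> ('i \<Rightarrow> real) \<Rightarrow> ennreal"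
  assumes J: "finite J" "j \<notin> J"
    and meas: "(\<lambda>t. F (restrict t J) * h (t j) (restrict t J))
                 \<in> borel_measurable (PiM (insert j J) (\<lambda>_. lborel))"
    and h_meas: "\<And>x. (\<lambda>y. h y x) \<in> borel_measurable borel"
    and h_prob: "\<And>x. (\<integral>\<^sup>+ y. h y x \<partial>lborel) = 1"
  shows "(\<integral>\<^sup>+ t. F (restrict t J) * h (t j) (restrict t J) \<partial>PiM (insert j J) (\<lambda>_. lborel))
       = (\<integral>\<^sup>+ x. F x \<partial>PiM J (\<lambda>_. lborel))"
proof -
  interpret product_sigma_finite "\<lambda>_::'i. lborel :: real measure" by standard
  have "(\<integral>\<^sup>+ t. F (restrict t J) * h (t j) (restrict t J) \<partial>PiM (insert j J) (\<lambda>_. lborel))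
      = (\<integral>\<^sup>+ x. (\<integral>\<^sup>+ y. F (restrict (x(j := y)) J) * h y (restrict (x(j := y)) J) \<partial>lborel)
           \<partial>PiM J (\<lambda>_. lborel))"
    using product_nn_integral_insert[OF J meas] by simp
  also have "\<dots> = (\<integral>\<^sup>+ x. F x * (\<integral>\<^sup>+ y. h y x \<partial>lborel) \<partial>PiM J (\<lambda>_. lborel))"
  proof (rule nn_integral_cong)
    fix x assume "x \<in> space (PiM J (\<lambda>_. lborel :: real measure))"
    then have "restrict (x(j := y)) J = x" for y
      using J by (auto simp: space_PiM PiE_def extensional_def fun_eq_iff)
    then show "(\<integral>\<^sup>+ y. F (restrict (x(j := y)) J) * h y (restrict (x(j := y)) J) \<partial>lborel)
        = F x * (\<integral>\<^sup>+ y. h y x \<partial>lborel)"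
      using h_meas by (simp add: nn_integral_cmult)
  qed
  finally show ?thesis by (simp add: h_prob)
qed

lemma distr_restrict_density_PiM_insert:
  fixes G :: "('i \<Rightarrow> real) \<Rightarrow> ennreal" and h :: "real \<Rightarrow> ('i \<Rightarrow> real) \<Rightarrow> ennreal"
  assumes J: "finite J" "j \<notin> J"
    and meas: "(\<lambda>t. G (restrict t J) * h (t j) (restrict t J))
                 \<in> borel_measurable (PiM (insert j J) (\<lambda>_. lborel))"
    and G_meas: "G \<in> borel_measurable (PiM J (\<lambda>_. lborel))"
    and h_meas: "\<And>x. (\<lambda>y. h y x) \<in> borel_measurable borel"
    and h_prob: "\<And>x. (\<integral>\<^sup>+ y. h y x \<partial>lborel) = 1"
  shows "distr (density (PiM (insert j J) (\<lambda>_. lborel)) (\<lambda>t. G (restrict t J) * h (t j) (restrict t J)))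
           (PiM J (\<lambda>_. lborel)) (\<lambda>t. restrict t J)
       = density (PiM J (\<lambda>_. lborel)) G"
    (is "distr (density ?PI ?f) ?PJ ?r = _")
proof (rule measure_eqI)
  fix A assume "A \<in> sets (distr (density ?PI ?f) ?PJ ?r)"
  then have A: "A \<in> sets ?PJ" by simp
  have r: "?r \<in> measurable ?PI ?PJ" by (rule measurable_restrict_subset) auto
  have "emeasure (distr (density ?PI ?f) ?PJ ?r) A = (\<integral>\<^sup>+ t. ?f t * indicator A (?r t) \<partial>?PI)"
    using measurable_sets[OF r A] A meas
    by (subst emeasure_distr) (auto simp: emeasure_density intro!: nn_integral_cong split: split_indicator)
  also have "\<dots> = (\<integral>\<^sup>+ x. G x * indicator A x \<partial>?PJ)"
  proof -
    have "(\<lambda>t. indicator A (?r t) :: ennreal) \<in> borel_measurable ?PI"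
      using measurable_comp[OF r borel_measurable_indicator[OF A]] by (simp add: comp_def)
    with meas have "(\<lambda>t. ?f t * indicator A (?r t)) \<in> borel_measurable ?PI"
      by (rule borel_measurable_times_ennreal)
    then have "(\<lambda>t. (G (?r t) * indicator A (?r t)) * h (t j) (?r t)) \<in> borel_measurable ?PI"
      by (simp add: mult_ac)
    from nn_integral_PiM_insert_kernel[OF J this h_meas h_prob] show ?thesis
      by (simp only: mult_ac)
  qed
  also have "\<dots> = emeasure (density ?PJ G) A"
    using G_meas A by (simp add: emeasure_density)
  finally show "emeasure (distr (density ?PI ?f) ?PJ ?r) A = emeasure (density ?PJ G) A" .
qed simp

lemma distr_component_density_PiM_singleton:
  fixes k :: 'i and d :: "real \<Rightarrow> ennreal"
  assumes "d \<in> borel_measurable borel"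
  shows "distr (density (PiM {k} (\<lambda>_. lborel)) (\<lambda>t. d (t k))) lborel (\<lambda>t. t k) = density lborel d"
proof -
  interpret product_sigma_finite "\<lambda>_::'i. lborel :: real measure" by standard
  show ?thesis
    using assms distr_singleton[where i=k] by (subst density_distr[symmetric]) auto
qed

lemma distributed_comp_of_distr_density:
  assumes X: "distributed M N X f" and \<pi>: "\<pi> \<in> measurable N K"
    and eq: "distr (density N f) K \<pi> = density K g" and g: "g \<in> borel_measurable K"
  shows "distributed M K (\<lambda>\<omega>. \<pi> (X \<omega>)) g"
proof -
  have X_meas: "X \<in> measurable M N" using X by (simp add: distributed_def)
  have "distr M K (\<lambda>\<omega>. \<pi> (X \<omega>)) = distr (distr M N X) K \<pi>"
    using distr_distr[OF \<pi> X_meas] by (simp add: comp_def)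
  also have "\<dots> = density K g" using X eq by (simp add: distributed_def)
  finally show ?thesis
    unfolding distributed_def using g measurable_comp[OF X_meas \<pi>] by (simp add: comp_def)
qed

definition ntr_tail_density :: "real measure \<Rightarrow> nat set list \<Rightarrow> nat \<Rightarrow> (nat \<Rightarrow> real) \<Rightarrow> ennreal" where
  "ntr_tail_density \<rho> Es j t = (\<Prod>l\<in>{j..length Es}.
     shifted_exp_density (phi \<rho> (rsum Es l)) (if l = length Es then 0 else t (Suc l)) (t l))"

lemma ntr_tail_density_measurable:
  "ntr_tail_density \<rho> Es j \<in> borel_measurable (PiM {j..length Es} (\<lambda>_. lborel))"
  unfolding ntr_tail_density_def
proof (intro borel_measurable_prod_ennreal)
  fix l assume l: "l \<in> {j..length Es}"
  have comp [measurable]: "(\<lambda>t. t i) \<in> borel_measurable (PiM {j..length Es} (\<lambda>_. lborel))"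
    if "i \<in> {j..length Es}" for i
    using that by measurable
  show "(\<lambda>t. shifted_exp_density (phi \<rho> (rsum Es l)) (if l = length Es then 0 else t (Suc l)) (t l))
      \<in> borel_measurable (PiM {j..length Es} (\<lambda>_. lborel))"
    using l by (cases "l = length Es") (simp_all add: comp)
qed

lemma ntr_tail_density_Suc:
  assumes "j < length Es"
  shows "ntr_tail_density \<rho> Es j = (\<lambda>t. ntr_tail_density \<rho> Es (Suc j) (restrict t {Suc j..length Es})
           * shifted_exp_density (phi \<rho> (rsum Es j)) (t (Suc j)) (t j))"
proof
  fix t
  have "ntr_tail_density \<rho> Es (Suc j) (restrict t {Suc j..length Es}) = ntr_tail_density \<rho> Es (Suc j) t"
    unfolding ntr_tail_density_def by (intro prod.cong) auto
  moreover have "{j..length Es} = insert j {Suc j..length Es}" using assms by auto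
  ultimately show "ntr_tail_density \<rho> Es j t = ntr_tail_density \<rho> Es (Suc j) (restrict t {Suc j..length Es})
           * shifted_exp_density (phi \<rho> (rsum Es j)) (t (Suc j)) (t j)"
    using assms unfolding ntr_tail_density_def by (simp add: mult.commute)
qed

lemma ntr_tail_density_length:
  "ntr_tail_density \<rho> Es (length Es) = (\<lambda>t. shifted_exp_density (phi \<rho> (rsum Es (length Es))) 0 (t (length Es)))"
  by (simp add: ntr_tail_density_def fun_eq_iff)

lemma ntr_tail_density_1:
  assumes levy: "levy_measure_01 \<rho>" and nonempty: "Es \<noteq> []"
  shows "ntr_tail_density \<rho> Es 1 = ntr_density \<rho> Es"
proof
  fix t :: "nat \<Rightarrow> real"
  let ?N = "length Es"
  define c where "c l = phi \<rho> (rsum Es l)" for l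
  \<comment> \<open>setting \<open>t (N + 1) = 0\<close> makes the last factor of the product look like the others\<close>
  define s where "s = t(Suc ?N := 0)"
  have c_nonneg: "0 \<le> c l" for l
    unfolding c_def using phi_nonneg[OF levy] .
  have "ntr_tail_density \<rho> Es 1 t = (\<Prod>l=1..?N. shifted_exp_density (c l) (s (Suc l)) (s l))"
    unfolding ntr_tail_density_def c_def s_def by (intro prod.cong) auto
  also have "\<dots> = ennreal (\<Prod>l=1..?N. c l * exp (- c l * (s l - s (Suc l))))
                  * (\<Prod>l=1..?N. indicator {s (Suc l)<..} (s l))"
    unfolding shifted_exp_density_def using c_nonneg by (simp add: prod.distrib prod_ennreal)
  also have "(\<Prod>l=1..?N. c l * exp (- c l * (s l - s (Suc l))))
      = (\<Prod>l=1..?N. c l) * exp (- (\<Sum>l=1..?N. c l * (s l - s (Suc l))))"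
    by (simp add: prod.distrib exp_sum flip: sum_negf)
  also have "(\<Sum>l=1..?N. c l * (s l - s (Suc l))) = (\<Sum>l=1..?N. psi \<rho> (blk Es l) (rsum Es (l - 1)) * t l)"
    using sum_psi_rsum_telescope[OF levy, where N="?N" and Es=Es and t=s] by (simp add: c_def s_def)
  also have "(\<Prod>l=1..?N. indicator {s (Suc l)<..} (s l) :: ennreal)
      = indicator {t. (\<forall>j\<in>{1..<?N}. t j > t (Suc j)) \<and> t ?N > 0} t"
  proof -
    have "(\<forall>l\<in>{1..?N}. s (Suc l) < s l) \<longleftrightarrow> (\<forall>j\<in>{1..<?N}. t j > t (Suc j)) \<and> t ?N > 0"
      using nonempty by (auto simp: s_def Ball_def Suc_le_eq)
    then show ?thesis by (auto simp: indicator_def)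
  qed
  finally show "ntr_tail_density \<rho> Es 1 t = ntr_density \<rho> Es t"
    unfolding ntr_density_def c_def by (simp add: exp_sum[symmetric] sum_negf mult.commute)
qed

lemma distributed_ntr_tail:
  fixes T :: "nat \<Rightarrow> 'a \<Rightarrow> real"
  assumes levy: "levy_measure_01 \<rho>" and nonempty: "Es \<noteq> []"
    and rates: "\<And>l. 1 \<le> l \<Longrightarrow> l \<le> length Es \<Longrightarrow> 0 < phi \<rho> (rsum Es l)"
    and dens: "distributed M (PiM {1..length Es} (\<lambda>_. lborel))
                 (\<lambda>\<omega>. \<lambda>i\<in>{1..length Es}. T i \<omega>) (ntr_density \<rho> Es)"
    and k: "1 \<le> k" "k \<le> length Es"
  shows "distributed M (PiM {k..length Es} (\<lambda>_. lborel))
           (\<lambda>\<omega>. \<lambda>i\<in>{k..length Es}. T i \<omega>) (ntr_tail_density \<rho> Es k)"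
  using k(1)
proof (induction k rule: dec_induct)
  case base
  from dens show ?case by (simp only: ntr_tail_density_1[OF levy nonempty])
next
  case (step j)
  let ?N = "length Es"
  have jN: "j < ?N" using step.hyps k(2) by simp
  let ?h = "\<lambda>y x. shifted_exp_density (phi \<rho> (rsum Es j)) (x (Suc j)) y"
  have split: "{j..?N} = insert j {Suc j..?N}" using jN by auto
  have density_eq: "ntr_tail_density \<rho> Es j
      = (\<lambda>t. ntr_tail_density \<rho> Es (Suc j) (restrict t {Suc j..?N}) * ?h (t j) (restrict t {Suc j..?N}))"
    using ntr_tail_density_Suc[OF jN] jN by simp
  have marginal: "distr (density (PiM {j..?N} (\<lambda>_. lborel)) (ntr_tail_density \<rho> Es j))
           (PiM {Suc j..?N} (\<lambda>_. lborel)) (\<lambda>t. restrict t {Suc j..?N})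
      = density (PiM {Suc j..?N} (\<lambda>_. lborel)) (ntr_tail_density \<rho> Es (Suc j))"
    unfolding split density_eq
  proof (rule distr_restrict_density_PiM_insert)
    show "(\<lambda>t. ntr_tail_density \<rho> Es (Suc j) (restrict t {Suc j..?N}) * ?h (t j) (restrict t {Suc j..?N}))
        \<in> borel_measurable (PiM (insert j {Suc j..?N}) (\<lambda>_. lborel))"
      using ntr_tail_density_measurable[of \<rho> Es j] unfolding split density_eq .
    show "(\<integral>\<^sup>+ y. ?h y x \<partial>lborel) = 1" for x
      using step.hyps(1) jN rates by (intro nn_integral_shifted_exp_density) auto
  qed (auto simp: ntr_tail_density_measurable)
  have sub: "{Suc j..?N} \<subseteq> {j..?N}" by auto
  show ?case
    using distributed_comp_of_distr_density[OF step.IH measurable_restrict_subset[OF sub] marginal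
        ntr_tail_density_measurable]
    by (simp only: restrict_restrict Int_absorb1[OF sub])
qed

theorem proposition5p2:
  fixes \<rho> :: "real measure" and n :: nat and Es :: "nat set list"
    and M :: "'a measure" and T :: "nat \<Rightarrow> 'a \<Rightarrow> real"
  assumes levy: "levy_measure_01 \<rho>"
    and mean1: "(\<integral>\<^sup>+ u. ennreal u \<partial>\<rho>) = 1"
    and n: "n \<ge> 1"
    and part: "ordered_partition n Es"
    and P: "prob_space M"
    and dens: "distributed M (PiM {1..length Es} (\<lambda>_. lborel))
                 (\<lambda>\<omega>. \<lambda>i\<in>{1..length Es}. T i \<omega>) (ntr_density \<rho> Es)"
  shows "(\<forall>j\<in>{1..<length Es}. \<exists>g.
            distributed M (PiM {Suc j..length Es} (\<lambda>_. lborel))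
              (\<lambda>\<omega>. \<lambda>i\<in>{Suc j..length Es}. T i \<omega>) g \<and>
            distributed M (PiM {j..length Es} (\<lambda>_. lborel))
              (\<lambda>\<omega>. \<lambda>i\<in>{j..length Es}. T i \<omega>)
              (\<lambda>t. g (restrict t {Suc j..length Es}) *
                   ennreal (phi \<rho> (rsum Es j) *
                            exp (- phi \<rho> (rsum Es j) * (t j - t (Suc j)))) *
                   indicator {t. t j > t (Suc j)} t))
       \<and> distributed M lborel (T (length Es))
           (\<lambda>y. ennreal (phi \<rho> n * exp (- phi \<rho> n * y)) * indicator {0<..} y)"
proof -
  let ?N = "length Es"
  have nonempty: "Es \<noteq> []" using ordered_partition_nonempty[OF part n] .
  have rates: "0 < phi \<rho> (rsum Es l)" if "1 \<le> l" "l \<le> ?N" for l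
    using phi_pos[OF levy _ rsum_pos[OF part that]] mean1 by simp
  note tail = distributed_ntr_tail[OF levy nonempty rates dens]
  have last: "distributed M (PiM {?N} (\<lambda>_. lborel)) (\<lambda>\<omega>. \<lambda>i\<in>{?N}. T i \<omega>)
      (\<lambda>t. shifted_exp_density (phi \<rho> n) 0 (t ?N))"
    using tail[of ?N] nonempty by (simp add: ntr_tail_density_length rsum_length[OF part] Suc_le_eq)
  show ?thesis
  proof (intro conjI ballI exI)
    fix j assume j: "j \<in> {1..<?N}"
    show "distributed M (PiM {Suc j..?N} (\<lambda>_. lborel)) (\<lambda>\<omega>. \<lambda>i\<in>{Suc j..?N}. T i \<omega>)
        (ntr_tail_density \<rho> Es (Suc j))"
      using tail[of "Suc j"] j by simp
    show "distributed M (PiM {j..?N} (\<lambda>_. lborel)) (\<lambda>\<omega>. \<lambda>i\<in>{j..?N}. T i \<omega>)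
        (\<lambda>t. ntr_tail_density \<rho> Es (Suc j) (restrict t {Suc j..?N}) *
             ennreal (phi \<rho> (rsum Es j) * exp (- phi \<rho> (rsum Es j) * (t j - t (Suc j)))) *
             indicator {t. t j > t (Suc j)} t)"
      using tail[of j] j ntr_tail_density_Suc[of j Es \<rho>]
      by (simp add: shifted_exp_density_def mult.assoc indicator_def)
  next
    have "distributed M lborel (\<lambda>\<omega>. (\<lambda>i\<in>{?N}. T i \<omega>) ?N) (shifted_exp_density (phi \<rho> n) 0)"
      by (rule distributed_comp_of_distr_density[OF last])
        (auto intro: distr_component_density_PiM_singleton)
    then show "distributed M lborel (T ?N)
        (\<lambda>y. ennreal (phi \<rho> n * exp (- phi \<rho> n * y)) * indicator {0<..} y)"
      by (simp add: shifted_exp_density_def[abs_def])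
  qed
qed

end
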